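(* In the general setting of the context, for every $h\in\{0,1,\dots,L-1\}$, $$\mathbb{P}\Big(P_h>\frac{1+2\theta_h}{1-\theta_h}P^*\Big)\le\exp\Big(-\frac{\epsilon^2}{6\gamma}\Big).$$
   Context: General setting. Let $m,k,n$ be positive integers and $b\in\mathbb{R}^m_{++}$. Let $\mathcal G$ be the set of proper, concave, upper semicontinuous functions $f:\mathbb{R}^k\to[-\infty,\infty)$ with bounded superlevel sets such that $\mathrm{dom} f\subset\mathbb{R}^k_+$ and $f(0)=0$. Let $f_1,\dots,f_n\in\mathcal G$ and $A_1,\dots,A_n\in\mathbb{R}_+^{m\times k}$. Let $P^*=\sup\{\sum_{t=1}^n f_t(x_t): x_t\in\mathbb{R}^k,\ \sum_{t=1}^n A_tx_t\le b\}$ and assume $P^*>0$. Let $\gamma>0$ satisfy, for every $t\in[n]$: $(A_tx)_i/b_i\le\gamma$ for all $i\in[m]$ and all $x$ with $f_t(x)\ge0$, and $f_t(x)\le\gamma P^*$ for all $x\in\mathrm{dom} f_t$. Let $\epsilon\in(0,1)$ be such that $L=\log_2(1/\epsilon)$ and $n\epsilon$ are integers. Let $\sigma$ be a uniformly random permutation of $[n]$; probabilities are over $\sigma$. For $h\in\{0,\dots,L-1\}$ let $\theta_h=2^{-(h+1)/2}\epsilon^{1/2}$ and $$P_h=\sup\Big\{\tfrac{1}{2^h\epsilon(1-\theta_h)}\sum_{t=1}^{2^hn\epsilon}f_{\sigma(t)}(x_t)\ :\ x_t\in\mathbb{R}^k,\ \tfrac{1}{2^h\epsilon(1+\theta_h)}\sum_{t=1}^{2^hn\epsilon}A_{\sigma(t)}x_t\le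 b\Big\}.$$ *)

theory Defs
  imports "HOL-Analysis.Analysis" "HOL-Probability.Probability"
begin

text \<open>Functions R^k -> [-infinity, infinity) are modelled as ereal-valued functions
  that never take the value +infinity.\<close>

definition edom :: "('a \<Rightarrow> ereal) \<Rightarrow> 'a set" where
  "edom f = {x. f x \<noteq> -\<infinity>}"

definition proper_concave_fun :: "('a::real_vector \<Rightarrow> ereal) \<Rightarrow> bool" where
  "proper_concave_fun f \<longleftrightarrow> (\<forall>x. f x \<noteq> \<infinity>) \<and> (\<exists>x. f x \<noteq> -\<infinity>)"

definition concave_efun :: "('a::real_vector \<Rightarrow> ereal) \<Rightarrow> bool" where
  "concave_efun f \<longleftrightarrow> convex {(x, t::real). ereal t \<le> f x}"

definition usc_efun :: "('a::topological_space \<Rightarrow> ereal) \<Rightarrow> bool" where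
  "usc_efun f \<longleftrightarrow> (\<forall>x. Limsup (at x) f \<le> f x)"

definition bounded_superlevel :: "('a::metric_space \<Rightarrow> ereal) \<Rightarrow> bool" where
  "bounded_superlevel f \<longleftrightarrow> (\<forall>t::real. bounded {x. ereal t \<le> f x})"

definition classG :: "(real^'k \<Rightarrow> ereal) \<Rightarrow> bool" where
  "classG f \<longleftrightarrow> proper_concave_fun f \<and> concave_efun f \<and> usc_efun f \<and> bounded_superlevel f
     \<and> edom f \<subseteq> {x. \<forall>j. 0 \<le> x $ j} \<and> f 0 = 0"

definition Pstar :: "nat \<Rightarrow> (nat \<Rightarrow> real^'k \<Rightarrow> ereal) \<Rightarrow> (nat \<Rightarrow> real^'k^'m) \<Rightarrow> real^'m \<Rightarrow> ereal" where
  "Pstar n f A b = Sup {(\<Sum>t\<in>{1..n}. f t (x t)) | x :: nat \<Rightarrow> real^'k.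
      \<forall>i. (\<Sum>t\<in>{1..n}. A t *v x t) $ i \<le> b $ i}"

definition theta :: "real \<Rightarrow> nat \<Rightarrow> real" where
  "theta \<epsilon> h = 2 powr (- (real h + 1) / 2) * sqrt \<epsilon>"

text \<open>P_h for a permutation sigma; the number of terms is 2^h n epsilon (an integer).\<close>
definition Ph :: "real \<Rightarrow> nat \<Rightarrow> nat \<Rightarrow> (nat \<Rightarrow> real^'k \<Rightarrow> ereal) \<Rightarrow> (nat \<Rightarrow> real^'k^'m)
      \<Rightarrow> real^'m \<Rightarrow> (nat \<Rightarrow> nat) \<Rightarrow> ereal" where
  "Ph \<epsilon> h n f A b \<sigma> =
    (let N = nat \<lfloor>2 ^ h * real n * \<epsilon>\<rfloor>; \<theta> = theta \<epsilon> h in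
     Sup {ereal (1 / (2 ^ h * \<epsilon> * (1 - \<theta>))) * (\<Sum>t\<in>{1..N}. f (\<sigma> t) (x t)) | x :: nat \<Rightarrow> real^'k.
       \<forall>i. (1 / (2 ^ h * \<epsilon> * (1 + \<theta>))) * (\<Sum>t\<in>{1..N}. A (\<sigma> t) *v x t) $ i \<le> b $ i})"

end

theory Submission
  imports Defs
begin

text \<open>By Lagrangian duality, with the zero allocation as a Slater point (\<open>b\<close> is strictly
  positive), there are a multiplier \<open>p \<ge> 0\<close> and prices \<open>c\<^sub>t \<in> [0, \<gamma> P*]\<close> with
  \<open>f\<^sub>t y \<le> c\<^sub>t + p \<bullet> A\<^sub>t y\<close> and \<open>\<Sum> c\<^sub>t + p \<bullet> b \<le> P*\<close>. Hence \<open>P\<^sub>h\<close> is bounded by an affine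
  function of the sample sum \<open>\<Sum>\<^bsub>t \<le> N\<^esub> c\<^bsub>\<sigma> t\<^esub>\<close>, and \<open>P\<^sub>h > (1 + 2\<theta>)/(1 - \<theta>) P*\<close> forces this
  sum to exceed its mean \<open>2\<^sup>h \<epsilon> \<Sum> c\<^sub>t\<close> by \<open>2\<^sup>h \<epsilon> \<theta> P*\<close>. A Chernoff bound for sampling
  without replacement, whose moment generating function is dominated by that of sampling with
  replacement by Maclaurin's inequality, makes this event have probability at most
  \<open>exp (- 2\<^sup>h \<epsilon> \<theta>\<^sup>2 / (3 \<gamma>)) = exp (- \<epsilon>\<^sup>2 / (6 \<gamma>))\<close>.\<close>

section \<open>Maclaurin's inequality\<close>

lemma power_Suc_tangent_le:
  fixes r e :: real
  assumes "0 \<le> r" "0 \<le> r + e"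
  shows "r ^ Suc k + real (Suc k) * r ^ k * e \<le> (r + e) ^ Suc k"
proof (induction k)
  case 0
  then show ?case by simp
next
  case (Suc k)
  have "(r + e) * (r ^ Suc k + real (Suc k) * r ^ k * e)
      = r ^ Suc (Suc k) + real (Suc (Suc k)) * r ^ Suc k * e + real (Suc k) * r ^ k * e\<^sup>2"
    by (simp add: algebra_simps power2_eq_square)
  then have "r ^ Suc (Suc k) + real (Suc (Suc k)) * r ^ Suc k * e
      \<le> (r + e) * (r ^ Suc k + real (Suc k) * r ^ k * e)"
    using assms(1) by simp
  also have "\<dots> \<le> (r + e) * (r + e) ^ Suc k"
    using Suc assms(2) by (simp add: mult_left_mono)
  finally show ?case by simp
qed

lemma binomial_mean_power_step:
  fixes r q :: real
  assumes "1 \<le> n" "0 \<le> r" "0 \<le> q"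
  shows "real (n choose Suc k) * r ^ Suc k + q * real (n choose k) * r ^ k
     \<le> real (Suc n choose Suc k) * ((real n * r + q) / (real n + 1)) ^ Suc k"
proof (cases "k \<le> n")
  case False
  then have "n choose k = 0" "n choose Suc k = 0" "Suc n choose Suc k = 0" by auto
  then show ?thesis by (simp only: of_nat_0)
next
  case True
  define K where "K = real (Suc n choose Suc k)"
  define e where "e = (q - r) / (real n + 1)"
  have K1: "(real n + 1) * real (n choose k) = real (Suc k) * K"
    unfolding K_def using Suc_times_binomial[of k n] by (metis of_nat_Suc of_nat_mult add.commute)
  have "real ((n - k) * (Suc n choose Suc k)) = real (Suc n * (n choose Suc k))"
    by (metis binomial_absorb_comp diff_Suc_Suc diff_Suc_1)
  then have K2: "(real n + 1) * real (n choose Suc k) = (real n - real k) * K"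
    using True unfolding K_def of_nat_mult by (simp add: of_nat_diff)
  have mean: "(real n * r + q) / (real n + 1) = r + e"
    unfolding e_def by (simp add: field_simps)
  have "real (n choose Suc k) * r ^ Suc k + q * real (n choose k) * r ^ k
     = ((real n + 1) * real (n choose Suc k) * r ^ Suc k
        + q * ((real n + 1) * real (n choose k)) * r ^ k) / (real n + 1)"
    by (simp add: field_simps)
  also have "\<dots> = K * (r ^ Suc k + real (Suc k) * r ^ k * e)"
    unfolding K1 K2 e_def by (simp add: field_simps)
  also have "\<dots> \<le> K * (r + e) ^ Suc k"
  proof (rule mult_left_mono)
    have "0 \<le> r + e" unfolding mean[symmetric] using assms by simp
    then show "r ^ Suc k + real (Suc k) * r ^ k * e \<le> (r + e) ^ Suc k"
      using assms(2) by (intro power_Suc_tangent_le)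
  qed (simp add: K_def)
  finally show ?thesis unfolding K_def mean .
qed

definition esym :: "('a \<Rightarrow> real) \<Rightarrow> 'a set \<Rightarrow> nat \<Rightarrow> real" where
  "esym w S k = (\<Sum>T\<in>{T. T \<subseteq> S \<and> card T = k}. \<Prod>i\<in>T. w i)"

lemma esym_0 [simp]: "finite S \<Longrightarrow> esym w S 0 = 1"
proof -
  assume "finite S"
  then have "{T. T \<subseteq> S \<and> card T = 0} = {{}}" by (auto dest: finite_subset)
  then show ?thesis by (simp add: esym_def)
qed

lemma esym_empty_Suc [simp]: "esym w {} (Suc k) = 0"
  by (simp add: esym_def)

lemma esym_insert_Suc:
  assumes "finite S" "i \<notin> S"
  shows "esym w (insert i S) (Suc k) = esym w S (Suc k) + w i * esym w S k"
proof -
  let ?S = "\<lambda>k. {T. T \<subseteq> S \<and> card T = k}"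
  have split: "{T. T \<subseteq> insert i S \<and> card T = Suc k} = ?S (Suc k) \<union> insert i ` ?S k"
  proof (intro equalityI subsetI)
    fix T assume T: "T \<in> {T. T \<subseteq> insert i S \<and> card T = Suc k}"
    show "T \<in> ?S (Suc k) \<union> insert i ` ?S k"
    proof (cases "i \<in> T")
      case True
      then have "T = insert i (T - {i})" "card (T - {i}) = k" "T - {i} \<subseteq> S"
        using T by (auto simp: card_Diff_singleton)
      then show ?thesis by blast
    qed (use T in auto)
  next
    fix T assume "T \<in> ?S (Suc k) \<union> insert i ` ?S k"
    then show "T \<in> {T. T \<subseteq> insert i S \<and> card T = Suc k}"
      using assms by auto (metis card_insert_disjoint finite_subset subsetD)
  qed
  have "esym w (insert i S) (Suc k) = esym w S (Suc k) + (\<Sum>T\<in>insert i ` ?S k. \<Prod>j\<in>T. w j)"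
    unfolding esym_def split using assms by (intro sum.union_disjoint) auto
  also have "(\<Sum>T\<in>insert i ` ?S k. \<Prod>j\<in>T. w j) = (\<Sum>T\<in>?S k. w i * (\<Prod>j\<in>T. w j))"
    using assms by (subst sum.reindex) (auto simp: inj_on_def intro!: sum.cong prod.insert dest: finite_subset)
  finally show ?thesis by (simp add: esym_def sum_distrib_left)
qed

lemma esym_le_binomial_mean_power:
  assumes "finite S" "\<And>i. i \<in> S \<Longrightarrow> 0 \<le> w i"
  shows "esym w S k \<le> real (card S choose k) * (sum w S / real (card S)) ^ k"
  using assms
proof (induction S arbitrary: k rule: finite_induct)
  case empty
  then show ?case by (cases k) auto
next
  case (insert i S)
  show ?case
  proof (cases k)
    case 0
    then show ?thesis using insert by simp
  next
    case (Suc k')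
    show ?thesis
    proof (cases "S = {}")
      case True
      then show ?thesis using Suc by (cases k') (auto simp: esym_insert_Suc)
    next
      case False
      define n where "n = card S"
      define r where "r = sum w S / real n"
      have n1: "1 \<le> n" using False insert(1) n_def by (simp add: Suc_leI card_gt_0_iff)
      have r0: "0 \<le> r" unfolding r_def using insert(4) by (auto intro!: sum_nonneg divide_nonneg_nonneg)
      have "esym w (insert i S) k = esym w S (Suc k') + w i * esym w S k'"
        using Suc insert(1,2) esym_insert_Suc by simp
      also have "\<dots> \<le> real (n choose Suc k') * r ^ Suc k' + w i * (real (n choose k') * r ^ k')"
        using insert(3)[of "Suc k'"] insert(3)[of k'] insert(4)
        by (intro add_mono mult_left_mono) (auto simp: n_def r_def)
      also have "\<dots> \<le> real (Suc n choose Suc k') * ((real n * r + w i) / (real n + 1)) ^ Suc k'"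
        using binomial_mean_power_step[OF n1 r0, of "w i" k'] insert(4) by (simp add: algebra_simps)
      also have "real n * r = sum w S" unfolding r_def using n1 by simp
      finally show ?thesis
        using insert(1,2) Suc by (simp add: n_def add.commute)
    qed
  qed
qed

section \<open>Sampling without replacement\<close>

lemma permutes_exists_image_eq:
  assumes "finite A" "T0 \<subseteq> A" "T \<subseteq> A" "card T0 = card T"
  obtains \<pi> where "\<pi> permutes A" "\<pi> ` T0 = T"
proof -
  have fin: "finite T0" "finite T" using assms finite_subset by auto
  obtain h1 where h1: "bij_betw h1 T0 T" using finite_same_card_bij[OF fin assms(4)] by blast
  have "card (A - T0) = card (A - T)" using assms fin by (simp add: card_Diff_subset)
  then obtain h2 where h2: "bij_betw h2 (A - T0) (A - T)"
    using finite_same_card_bij[of "A - T0" "A - T"] assms by blast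
  define \<pi> where "\<pi> x = (if x \<in> T0 then h1 x else if x \<in> A then h2 x else x)" for x
  have b1: "bij_betw \<pi> T0 T" using h1 by (rule bij_betw_cong[THEN iffD1, rotated]) (simp add: \<pi>_def)
  have b2: "bij_betw \<pi> (A - T0) (A - T)" using h2 by (rule bij_betw_cong[THEN iffD1, rotated]) (simp add: \<pi>_def)
  have "bij_betw \<pi> (T0 \<union> (A - T0)) (T \<union> (A - T))"
    by (rule bij_betw_combine[OF b1 b2]) auto
  moreover have "T0 \<union> (A - T0) = A" "T \<union> (A - T) = A" using assms by auto
  ultimately have "\<pi> permutes A"
    by (intro bij_imp_permutes) (use assms(2) in \<open>auto simp: \<pi>_def\<close>)
  moreover have "\<pi> ` T0 = T" using b1 by (simp add: bij_betw_def)
  ultimately show ?thesis by (rule that)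
qed

lemma card_permutes_image_eq:
  assumes "finite A" "B \<subseteq> A" "T0 \<subseteq> A" "T \<subseteq> A" "card T0 = card T"
  shows "card {\<sigma>. \<sigma> permutes A \<and> \<sigma> ` B = T0} = card {\<sigma>. \<sigma> permutes A \<and> \<sigma> ` B = T}"
proof -
  obtain \<pi> where \<pi>: "\<pi> permutes A" "\<pi> ` T0 = T"
    using permutes_exists_image_eq[OF assms(1,3-5)] by blast
  have \<pi>': "inv \<pi> permutes A" "inv \<pi> ` T = T0"
    using \<pi> by (auto intro: permutes_inv simp: image_inv_f_f permutes_inj)
  show ?thesis
  proof (rule bij_betw_same_card[of "\<lambda>\<sigma>. \<pi> \<circ> \<sigma>"],
         rule bij_betw_byWitness[where f'="\<lambda>\<sigma>. inv \<pi> \<circ> \<sigma>"])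
    show "\<forall>\<sigma>\<in>{\<sigma>. \<sigma> permutes A \<and> \<sigma> ` B = T0}. inv \<pi> \<circ> (\<pi> \<circ> \<sigma>) = \<sigma>"
      using \<pi>(1) by (simp add: o_assoc permutes_inv_o(2))
    show "\<forall>\<sigma>\<in>{\<sigma>. \<sigma> permutes A \<and> \<sigma> ` B = T}. \<pi> \<circ> (inv \<pi> \<circ> \<sigma>) = \<sigma>"
      using \<pi>(1) by (simp add: o_assoc permutes_inv_o(1))
    show "(\<circ>) \<pi> ` {\<sigma>. \<sigma> permutes A \<and> \<sigma> ` B = T0} \<subseteq> {\<sigma>. \<sigma> permutes A \<and> \<sigma> ` B = T}"
      using \<pi> by (auto intro: permutes_compose simp: image_comp[symmetric])
    show "(\<circ>) (inv \<pi>) ` {\<sigma>. \<sigma> permutes A \<and> \<sigma> ` B = T} \<subseteq> {\<sigma>. \<sigma> permutes A \<and> \<sigma> ` B = T0}"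
      using \<pi>' by (auto intro: permutes_compose simp: image_comp[symmetric])
  qed
qed

text \<open>Grouping the permutations by the image of \<open>B\<close>: every \<open>card B\<close>-subset of \<open>A\<close> is hit
  equally often.\<close>

lemma sum_permutes_prod_eq_esym:
  fixes w :: "'a \<Rightarrow> real"
  assumes "finite A" "B \<subseteq> A"
  shows "(\<Sum>\<sigma> | \<sigma> permutes A. \<Prod>t\<in>B. w (\<sigma> t))
      = real (card {\<sigma>. \<sigma> permutes A}) / real (card A choose card B) * esym w A (card B)"
proof -
  define P where "P = {\<sigma>. \<sigma> permutes A}"
  define \<T> where "\<T> = {T. T \<subseteq> A \<and> card T = card B}"
  define c where "c T = card {\<sigma>\<in>P. \<sigma> ` B = T}" for T
  have finP: "finite P" unfolding P_def using assms(1) by (rule finite_permutations)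
  have finT: "finite \<T>" unfolding \<T>_def using assms(1) by simp
  have img: "(\<lambda>\<sigma>. \<sigma> ` B) ` P \<subseteq> \<T>"
    using assms(2) by (auto simp: P_def \<T>_def card_image permutes_inj_on permutes_in_image
        dest: inj_on_subset[of _ UNIV B])
  have c_const: "c T = c B" if "T \<in> \<T>" for T
    using card_permutes_image_eq[of A B B T] that assms unfolding c_def P_def \<T>_def by simp
  have inj: "inj_on \<sigma> B" if "\<sigma> \<in> P" for \<sigma>
    using that permutes_inj_on unfolding P_def by blast
  have "(\<Sum>\<sigma>\<in>P. \<Prod>t\<in>B. w (\<sigma> t)) = (\<Sum>\<sigma>\<in>P. \<Prod>i\<in>\<sigma> ` B. w i)"
    using inj by (simp add: prod.reindex)
  also have "\<dots> = (\<Sum>T\<in>\<T>. \<Sum>\<sigma>\<in>{\<sigma>\<in>P. \<sigma> ` B = T}. \<Prod>i\<in>\<sigma> ` B. w i)"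
    by (rule sum.group[OF finP finT img, symmetric])
  also have "\<dots> = real (c B) * esym w A (card B)"
    unfolding esym_def \<T>_def[symmetric] sum_distrib_left using c_const
    by (intro sum.cong refl) (simp add: c_def)
  finally have sum_eq: "(\<Sum>\<sigma>\<in>P. \<Prod>t\<in>B. w (\<sigma> t)) = real (c B) * esym w A (card B)" .
  have "card P = (\<Sum>T\<in>\<T>. c T)"
    unfolding c_def card_eq_sum sum.group[OF finP finT img] ..
  also have "\<dots> = (card A choose card B) * c B"
    using c_const n_subsets[OF assms(1), of "card B"] by (simp add: \<T>_def)
  finally have "card P = (card A choose card B) * c B" .
  moreover have "0 < card A choose card B"
    using assms by (simp add: card_mono)
  ultimately show ?thesis using sum_eq by (simp add: P_def)
qed

lemma sum_permutes_prod_le: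
  fixes w :: "'a \<Rightarrow> real"
  assumes "finite A" "B \<subseteq> A" "\<And>i. i \<in> A \<Longrightarrow> 0 \<le> w i"
  shows "(\<Sum>\<sigma> | \<sigma> permutes A. \<Prod>t\<in>B. w (\<sigma> t))
      \<le> real (card {\<sigma>. \<sigma> permutes A}) * (sum w A / real (card A)) ^ card B"
proof -
  let ?C = "real (card A choose card B)" and ?P = "real (card {\<sigma>. \<sigma> permutes A})"
  have "0 < ?C"
    using assms by (simp add: card_mono)
  have "?P / ?C * esym w A (card B) \<le> ?P / ?C * (?C * (sum w A / real (card A)) ^ card B)"
    using esym_le_binomial_mean_power[of A w "card B"] assms by (intro mult_left_mono) auto
  then show ?thesis
    unfolding sum_permutes_prod_eq_esym[OF assms(1,2)] using \<open>0 < ?C\<close> by simp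
qed

lemma ln_add_one_ge_div:
  fixes x :: real
  assumes "0 \<le> x"
  shows "2 * x / (2 + x) \<le> ln (1 + x)"
proof -
  define h where "h t = ln (1 + t) - 2 * t / (2 + t)" for t :: real
  have "h 0 \<le> h x"
  proof (rule DERIV_nonneg_imp_increasing_open[OF assms])
    fix t :: real
    assume t: "0 < t" "t < x"
    have "DERIV h t :> (1 / (1 + t) - (2 * (2 + t) - 2 * t) / (2 + t)\<^sup>2)"
      unfolding h_def using t by (auto intro!: derivative_eq_intros simp: power2_eq_square)
    moreover have "4 * (1 + t) \<le> (2 + t)\<^sup>2"
      by (simp add: power2_eq_square algebra_simps)
    then have "(2 * (2 + t) - 2 * t) / (2 + t)\<^sup>2 \<le> 1 / (1 + t)"
      using t by (simp add: field_simps)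
    ultimately show "\<exists>y. DERIV h t :> y \<and> 0 \<le> y" by auto
  next
    show "continuous_on {0..x} h"
      unfolding h_def by (intro continuous_intros) auto
  qed
  then show ?thesis by (simp add: h_def)
qed

lemma chernoff_exponent_le:
  fixes x :: real
  assumes "0 \<le> x" "x \<le> 1"
  shows "x - (1 + x) * ln (1 + x) \<le> - (x\<^sup>2 / 3)"
proof -
  have "x\<^sup>2 * x \<le> x\<^sup>2"
    using assms by (intro mult_left_le) auto
  then have "(x + x\<^sup>2 / 3) * (2 + x) \<le> (1 + x) * (2 * x)"
    by (simp add: algebra_simps power2_eq_square)
  then have "x + x\<^sup>2 / 3 \<le> (1 + x) * (2 * x / (2 + x))"
    using assms by (simp add: field_simps)
  also have "\<dots> \<le> (1 + x) * ln (1 + x)"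
    using ln_add_one_ge_div[OF assms(1)] assms by (intro mult_left_mono) auto
  finally show ?thesis by simp
qed

lemma exp_le_chord:
  fixes l a c :: real
  assumes "0 \<le> c" "c \<le> a" "0 < a"
  shows "exp (l * c) \<le> 1 + c / a * (exp (l * a) - 1)"
proof -
  have "exp ((1 - c / a) *\<^sub>R 0 + (c / a) *\<^sub>R (l * a)) \<le> (1 - c / a) * exp 0 + (c / a) * exp (l * a)"
    using assms by (intro convex_onD[OF exp_convex]) auto
  moreover have "(1 - c / a) *\<^sub>R 0 + (c / a) *\<^sub>R (l * a) = l * c"
    using assms by simp
  ultimately show ?thesis by (simp add: algebra_simps)
qed

text \<open>Through Maclaurin's inequality the sample is compared with independent draws with
  replacement (as in Hoeffding's theorem); each draw is then bounded by the chord of \<open>exp\<close>.\<close>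

lemma sum_permutes_exp_sample_le:
  fixes c :: "'a \<Rightarrow> real"
  assumes "finite A" "B \<subseteq> A" "A \<noteq> {}" "\<And>i. i \<in> A \<Longrightarrow> 0 \<le> c i \<and> c i \<le> a" "0 < a"
  shows "(\<Sum>\<sigma> | \<sigma> permutes A. exp (l * (\<Sum>t\<in>B. c (\<sigma> t))))
      \<le> real (card {\<sigma>. \<sigma> permutes A})
         * exp ((exp (l * a) - 1) / a * (real (card B) / real (card A) * sum c A))"
proof -
  define w where "w i = exp (l * c i)" for i
  define y where "y = (exp (l * a) - 1) / a * sum c A / real (card A)"
  have A0: "0 < real (card A)" using assms by (simp add: card_gt_0_iff)
  have "sum w A \<le> (\<Sum>i\<in>A. 1 + c i / a * (exp (l * a) - 1))"
    unfolding w_def using exp_le_chord assms(4,5) by (intro sum_mono) auto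
  also have "\<dots> = real (card A) + sum c A / a * (exp (l * a) - 1)"
    by (simp add: sum.distrib sum_divide_distrib[symmetric] sum_distrib_right[symmetric])
  also have "\<dots> = real (card A) * (1 + y)"
    using A0 assms(5) by (simp add: y_def field_simps)
  finally have mean_le: "sum w A / real (card A) \<le> 1 + y"
    using A0 by (simp add: field_simps)
  have mean_nonneg: "0 \<le> sum w A / real (card A)"
    unfolding w_def by (auto intro!: sum_nonneg divide_nonneg_nonneg)
  have "(\<Sum>\<sigma> | \<sigma> permutes A. exp (l * (\<Sum>t\<in>B. c (\<sigma> t))))
      = (\<Sum>\<sigma> | \<sigma> permutes A. \<Prod>t\<in>B. w (\<sigma> t))"
    using finite_subset[OF assms(2,1)] unfolding w_def by (simp add: sum_distrib_left exp_sum)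
  also have "\<dots> \<le> real (card {\<sigma>. \<sigma> permutes A}) * (sum w A / real (card A)) ^ card B"
    using assms(1,2) by (rule sum_permutes_prod_le) (simp add: w_def)
  also have "\<dots> \<le> real (card {\<sigma>. \<sigma> permutes A}) * exp y ^ card B"
    using order_trans[OF mean_le exp_ge_add_one_self] mean_nonneg
    by (intro mult_left_mono power_mono) auto
  also have "exp y ^ card B
      = exp ((exp (l * a) - 1) / a * (real (card B) / real (card A) * sum c A))"
    by (simp add: y_def exp_of_nat_mult[symmetric] field_simps)
  finally show ?thesis .
qed

lemma card_permutes_sample_gt_le:
  fixes c :: "'a \<Rightarrow> real"
  assumes "finite A" "B \<subseteq> A" "A \<noteq> {}" "\<And>i. i \<in> A \<Longrightarrow> 0 \<le> c i \<and> c i \<le> a" "0 < a"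
    and \<mu>: "\<mu> = real (card B) / real (card A) * sum c A" "\<mu> \<le> M"
    and \<delta>: "0 < \<delta>" "\<delta> \<le> M"
  shows "real (card {\<sigma>. \<sigma> permutes A \<and> \<mu> + \<delta> < (\<Sum>t\<in>B. c (\<sigma> t))})
     \<le> real (card {\<sigma>. \<sigma> permutes A}) * exp (- (\<delta>\<^sup>2 / (3 * a * M)))"
proof -
  define P where "P = {\<sigma>. \<sigma> permutes A}"
  define E where "E = {\<sigma>. \<sigma> permutes A \<and> \<mu> + \<delta> < (\<Sum>t\<in>B. c (\<sigma> t))}"
  define x where "x = \<delta> / M"
  define l where "l = ln (1 + x) / a"
  have M: "0 < M" using \<delta> by linarith
  have x: "0 < x" "x \<le> 1" using \<delta> M by (auto simp: x_def)
  have l: "0 < l" "exp (l * a) = 1 + x" unfolding l_def using x assms(5) by auto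
  have finP: "finite P" unfolding P_def using assms(1) by (rule finite_permutations)
  have "real (card E) * exp (l * (\<mu> + \<delta>)) = (\<Sum>\<sigma>\<in>E. exp (l * (\<mu> + \<delta>)))" by simp
  also have "\<dots> \<le> (\<Sum>\<sigma>\<in>E. exp (l * (\<Sum>t\<in>B. c (\<sigma> t))))"
    unfolding E_def using l by (intro sum_mono) auto
  also have "\<dots> \<le> (\<Sum>\<sigma>\<in>P. exp (l * (\<Sum>t\<in>B. c (\<sigma> t))))"
    using finP by (intro sum_mono2) (auto simp: E_def P_def)
  also have "\<dots> \<le> real (card P) * exp (x / a * \<mu>)"
    using sum_permutes_exp_sample_le[OF assms(1-5), where l=l] unfolding P_def \<mu>(1) l by simp
  finally have "real (card E) \<le> real (card P) * exp (x / a * \<mu> - l * (\<mu> + \<delta>))"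
    by (simp add: exp_diff field_simps)
  also have "x / a * \<mu> - l * (\<mu> + \<delta>) = \<mu> / a * (x - ln (1 + x)) - ln (1 + x) * x * M / a"
    unfolding l_def x_def using M assms(5) by (simp add: field_simps)
  also have "\<dots> \<le> M / a * (x - ln (1 + x)) - ln (1 + x) * x * M / a"
    using \<mu>(2) assms(5) ln_add_one_self_le_self[of x] x
    by (intro diff_right_mono mult_right_mono divide_right_mono) auto
  also have "\<dots> = M / a * (x - (1 + x) * ln (1 + x))"
    by (simp add: algebra_simps)
  also have "\<dots> \<le> M / a * (- (x\<^sup>2 / 3))"
    using chernoff_exponent_le[of x] x M assms(5) by (intro mult_left_mono) auto
  also have "\<dots> = - (\<delta>\<^sup>2 / (3 * a * M))"
    unfolding x_def using M by (simp add: field_simps power2_eq_square)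
  finally show ?thesis
    unfolding E_def P_def by (simp add: mult_left_mono)
qed

section \<open>Lagrangian duality\<close>

lemma concave_efun_combination:
  assumes "concave_efun g" "ereal r1 \<le> g x1" "ereal r2 \<le> g x2" "0 \<le> u" "0 \<le> v" "u + v = 1"
  shows "ereal (u * r1 + v * r2) \<le> g (u *\<^sub>R x1 + v *\<^sub>R x2)"
proof -
  have "u *\<^sub>R (x1, r1) + v *\<^sub>R (x2, r2) \<in> {(x, t::real). ereal t \<le> g x}"
    using assms unfolding concave_efun_def by (intro convexD) auto
  then show ?thesis by simp
qed

lemma ereal_less_sum_real_terms:
  fixes F :: "'i \<Rightarrow> ereal"
  assumes "finite T" "\<And>t. t \<in> T \<Longrightarrow> F t \<noteq> \<infinity>" "ereal r < sum F T"
  shows "\<And>t. t \<in> T \<Longrightarrow> F t = ereal (real_of_ereal (F t))"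
    and "r < (\<Sum>t\<in>T. real_of_ereal (F t))"
proof -
  have "\<bar>sum F T\<bar> \<noteq> \<infinity>"
    using assms by (auto simp: sum_Pinfty)
  then have fin: "\<bar>F t\<bar> \<noteq> \<infinity>" if "t \<in> T" for t
    using that assms(1) by (auto simp: sum_Inf)
  then show "\<And>t. t \<in> T \<Longrightarrow> F t = ereal (real_of_ereal (F t))"
    by (simp add: ereal_real')
  have "(\<Sum>t\<in>T. real_of_ereal (F t)) = real_of_ereal (sum F T)"
    using fin by (rule sum_real_of_ereal)
  then show "r < (\<Sum>t\<in>T. real_of_ereal (F t))"
    using assms(3) \<open>\<bar>sum F T\<bar> \<noteq> \<infinity>\<close> by (cases "sum F T") auto
qed

lemma sum_concave_efun_combination_less:
  fixes f :: "'i \<Rightarrow> 'a::real_vector \<Rightarrow> ereal"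
  assumes "finite T" "\<And>t. t \<in> T \<Longrightarrow> concave_efun (f t) \<and> (\<forall>y. f t y \<noteq> \<infinity>)"
    and "ereal r1 < (\<Sum>t\<in>T. f t (x1 t))" "ereal r2 < (\<Sum>t\<in>T. f t (x2 t))"
    and "0 \<le> u" "0 \<le> v" "u + v = 1"
  shows "ereal (u * r1 + v * r2) < (\<Sum>t\<in>T. f t (u *\<^sub>R x1 t + v *\<^sub>R x2 t))"
proof -
  define \<rho>1 where "\<rho>1 t = real_of_ereal (f t (x1 t))" for t
  define \<rho>2 where "\<rho>2 t = real_of_ereal (f t (x2 t))" for t
  have fin: "\<And>t y. t \<in> T \<Longrightarrow> f t y \<noteq> \<infinity>" using assms(2) by blast
  note real1 = ereal_less_sum_real_terms[OF assms(1) fin assms(3), folded \<rho>1_def]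
  note real2 = ereal_less_sum_real_terms[OF assms(1) fin assms(4), folded \<rho>2_def]
  have "u * r1 + v * r2 < u * sum \<rho>1 T + v * sum \<rho>2 T"
  proof (cases "u = 0")
    case True
    then show ?thesis using assms real2(2) by simp
  next
    case False
    then have "u * r1 < u * sum \<rho>1 T" using assms real1(2) by simp
    moreover have "v * r2 \<le> v * sum \<rho>2 T" using assms real2(2) by (intro mult_left_mono) auto
    ultimately show ?thesis by linarith
  qed
  also have "ereal (u * sum \<rho>1 T + v * sum \<rho>2 T) = (\<Sum>t\<in>T. ereal (u * \<rho>1 t + v * \<rho>2 t))"
    by (simp add: sum.distrib sum_distrib_left)
  also have "\<dots> \<le> (\<Sum>t\<in>T. f t (u *\<^sub>R x1 t + v *\<^sub>R x2 t))"
    using assms real1(1) real2(1) by (intro sum_mono concave_efun_combination) auto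
  finally show ?thesis by simp
qed

definition resource_value_set ::
    "'i set \<Rightarrow> ('i \<Rightarrow> real^'k \<Rightarrow> ereal) \<Rightarrow> ('i \<Rightarrow> real^'k^'m) \<Rightarrow> ((real^'m) \<times> real) set" where
  "resource_value_set T f A = {(u, r). \<exists>x. (\<forall>i. (\<Sum>t\<in>T. A t *v x t) $ i \<le> u $ i)
      \<and> ereal r < (\<Sum>t\<in>T. f t (x t))}"

lemma convex_resource_value_set:
  fixes A :: "'i \<Rightarrow> real^'k^'m"
  assumes "finite T" "\<And>t. t \<in> T \<Longrightarrow> concave_efun (f t) \<and> (\<forall>y. f t y \<noteq> \<infinity>)"
  shows "convex (resource_value_set T f A)"
proof (rule convexI)
  fix z1 z2 :: "(real^'m) \<times> real" and u v :: real
  assume z: "z1 \<in> resource_value_set T f A" "z2 \<in> resource_value_set T f A"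
    and uv: "0 \<le> u" "0 \<le> v" "u + v = 1"
  obtain x1 where x1: "\<forall>i. (\<Sum>t\<in>T. A t *v x1 t) $ i \<le> fst z1 $ i" "ereal (snd z1) < (\<Sum>t\<in>T. f t (x1 t))"
    using z(1) unfolding resource_value_set_def by auto
  obtain x2 where x2: "\<forall>i. (\<Sum>t\<in>T. A t *v x2 t) $ i \<le> fst z2 $ i" "ereal (snd z2) < (\<Sum>t\<in>T. f t (x2 t))"
    using z(2) unfolding resource_value_set_def by auto
  define x where "x t = u *\<^sub>R x1 t + v *\<^sub>R x2 t" for t
  have "(\<Sum>t\<in>T. A t *v x t) $ i \<le> fst (u *\<^sub>R z1 + v *\<^sub>R z2) $ i" for i
  proof -
    have "(\<Sum>t\<in>T. A t *v x t) $ i = u * (\<Sum>t\<in>T. A t *v x1 t) $ i + v * (\<Sum>t\<in>T. A t *v x2 t) $ i"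
      unfolding x_def
      by (simp add: matrix_vector_right_distrib matrix_vector_mult_scaleR sum.distrib sum_distrib_left)
    also have "\<dots> \<le> u * fst z1 $ i + v * fst z2 $ i"
      using x1(1) x2(1) uv by (intro add_mono mult_left_mono) auto
    finally show ?thesis by simp
  qed
  moreover have "ereal (snd (u *\<^sub>R z1 + v *\<^sub>R z2)) < (\<Sum>t\<in>T. f t (x t))"
    unfolding x_def using sum_concave_efun_combination_less[OF assms x1(2) x2(2) uv] by simp
  ultimately show "u *\<^sub>R z1 + v *\<^sub>R z2 \<in> resource_value_set T f A"
    unfolding resource_value_set_def by (cases "u *\<^sub>R z1 + v *\<^sub>R z2") auto
qed

lemma separating_hyperplane_point:
  fixes S :: "'a::euclidean_space set"
  assumes "convex S" "z \<notin> S"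
  obtains a where "a \<noteq> 0" "\<And>x. x \<in> S \<Longrightarrow> 0 \<le> inner a (x - z)"
proof -
  have "convex ((+) (- z) ` S)" "0 \<notin> (+) (- z) ` S"
    using assms by (auto intro: convex_translation)
  then obtain a where "a \<noteq> 0" "\<forall>y\<in>(+) (- z) ` S. 0 \<le> inner a y"
    using separating_hyperplane_set_0 by blast
  then show ?thesis using that by auto
qed

text \<open>Slater's condition: as \<open>b\<close> is strictly positive, a hyperplane separating \<open>(b, \<beta>)\<close> from
  such a set cannot be vertical.\<close>

lemma separating_normal_value_neg:
  fixes S :: "((real^'m) \<times> real) set"
  assumes "\<forall>i. 0 < b $ i" "(p', q) \<noteq> 0"
    and low: "\<And>u r. \<forall>i. 0 \<le> u $ i \<Longrightarrow> r \<le> -1 \<Longrightarrow> (u, r) \<in> S"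
    and sep: "\<And>u r. (u, r) \<in> S \<Longrightarrow> 0 \<le> inner p' (u - b) + q * (r - \<beta>)"
  shows "q < 0"
proof -
  have b0: "\<forall>i. 0 \<le> b $ i" using assms(1) less_imp_le by blast
  have "0 \<le> q * (min (-1) (\<beta> - 1) - \<beta>)"
    using sep[OF low[OF b0, of "min (-1) (\<beta> - 1)"]] by simp
  then have "q \<le> 0" by (simp add: zero_le_mult_iff)
  moreover have "q \<noteq> 0"
  proof
    assume q: "q = 0"
    have "0 \<le> p' $ i" for i
    proof -
      have "(b + axis i 1, -1) \<in> S" using b0 by (intro low) (auto simp: axis_def)
      from sep[OF this] show ?thesis using q by (simp add: inner_axis)
    qed
    then have "0 \<le> p' $ i * b $ i" for i using b0 by simp
    moreover have "(\<Sum>i\<in>UNIV. p' $ i * b $ i) \<le> 0"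
      using sep[OF low[of 0 "-1"]] q by (simp add: inner_vec_def sum_negf)
    ultimately have "\<forall>i. p' $ i * b $ i = 0"
      using sum_nonneg_eq_0_iff[of UNIV "\<lambda>i. p' $ i * b $ i"] by (simp add: antisym sum_nonneg)
    then have "p' = 0"
      using assms(1) by (simp add: vec_eq_iff) (metis less_irrefl)
    then show False using assms(2) q by (simp add: zero_prod_def)
  qed
  ultimately show ?thesis by simp
qed

lemma separating_multiplier:
  fixes S :: "((real^'m) \<times> real) set"
  assumes "convex S" "(b, \<beta>) \<notin> S" "\<forall>i. 0 < b $ i" "(0, -1) \<in> S"
    and mono: "\<And>u r u' r'. (u, r) \<in> S \<Longrightarrow> \<forall>i. u $ i \<le> u' $ i \<Longrightarrow> r' \<le> r \<Longrightarrow> (u', r') \<in> S"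
  obtains p where "\<forall>i. 0 \<le> p $ i" "\<And>u r. (u, r) \<in> S \<Longrightarrow> r \<le> \<beta> + inner p (u - b)"
proof -
  obtain p' q where a: "(p', q) \<noteq> 0" "\<And>z. z \<in> S \<Longrightarrow> 0 \<le> inner (p', q) (z - (b, \<beta>))"
    using separating_hyperplane_point[OF assms(1,2)] by (metis surj_pair)
  have sep: "0 \<le> inner p' (u - b) + q * (r - \<beta>)" if "(u, r) \<in> S" for u r
    using a(2)[OF that] by simp
  have low: "(u, r) \<in> S" if "\<forall>i. 0 \<le> u $ i" "r \<le> -1" for u r
    using mono[OF assms(4)] that by simp
  have q: "q < 0"
    using assms(3) a(1) low sep by (rule separating_normal_value_neg)
  define p where "p = (- 1 / q) *\<^sub>R p'"
  have val: "r \<le> \<beta> + inner p (u - b)" if "(u, r) \<in> S" for u r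
  proof -
    have "0 \<le> (- 1 / q) * (inner p' (u - b) + q * (r - \<beta>))"
      using sep[OF that] q by (intro mult_nonneg_nonneg) auto
    then show ?thesis unfolding p_def using q by (simp add: field_simps)
  qed
  have "0 \<le> p $ i" for i
  proof (rule ccontr)
    assume "\<not> 0 \<le> p $ i"
    define R where "R = (\<bar>\<beta>\<bar> + 2) / - p $ i"
    have "0 < R" using \<open>\<not> 0 \<le> p $ i\<close> unfolding R_def by (simp add: divide_pos_neg)
    then have "-1 \<le> \<beta> + inner p (axis i R)"
      using val[OF low[of "b + axis i R" "-1"]] assms(3) by (simp add: axis_def less_imp_le)
    then show False using \<open>\<not> 0 \<le> p $ i\<close> unfolding R_def by (simp add: inner_axis)
  qed
  then show ?thesis using that val by blast
qed

lemma lagrange_multiplier_exists: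
  fixes f :: "'i \<Rightarrow> real^'k \<Rightarrow> ereal" and A :: "'i \<Rightarrow> real^'k^'m"
  assumes "finite T" "\<And>t. t \<in> T \<Longrightarrow> concave_efun (f t) \<and> (\<forall>y. f t y \<noteq> \<infinity>) \<and> f t 0 = 0"
    and "\<forall>i. 0 < b $ i"
    and opt: "\<And>x. \<forall>i. (\<Sum>t\<in>T. A t *v x t) $ i \<le> b $ i \<Longrightarrow> (\<Sum>t\<in>T. f t (x t)) \<le> ereal \<beta>"
  obtains p where "\<forall>i. 0 \<le> p $ i"
    "\<And>x. (\<Sum>t\<in>T. f t (x t)) \<le> ereal (\<beta> + inner p ((\<Sum>t\<in>T. A t *v x t) - b))"
proof -
  let ?S = "resource_value_set T f A"
  have "convex ?S"
    using assms(1,2) by (intro convex_resource_value_set) auto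
  moreover have "(b, \<beta>) \<notin> ?S"
  proof
    assume "(b, \<beta>) \<in> ?S"
    then obtain x where "\<forall>i. (\<Sum>t\<in>T. A t *v x t) $ i \<le> b $ i" "ereal \<beta> < (\<Sum>t\<in>T. f t (x t))"
      unfolding resource_value_set_def by blast
    then show False using opt by (meson not_le)
  qed
  moreover have "(0, -1) \<in> ?S"
    using assms(2) unfolding resource_value_set_def by (auto intro!: exI[of _ "\<lambda>_. 0"])
  moreover have "(u', r') \<in> ?S"
    if mem: "(u, r) \<in> ?S" and u_le: "\<forall>i. u $ i \<le> u' $ i" and r_le: "r' \<le> r" for u r u' r'
  proof -
    obtain x where x: "\<forall>i. (\<Sum>t\<in>T. A t *v x t) $ i \<le> u $ i" "ereal r < (\<Sum>t\<in>T. f t (x t))"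
      using mem unfolding resource_value_set_def by blast
    have "\<forall>i. (\<Sum>t\<in>T. A t *v x t) $ i \<le> u' $ i"
      using x(1) u_le order_trans by blast
    moreover have "ereal r' < (\<Sum>t\<in>T. f t (x t))"
      using x(2) r_le by (meson ereal_less_eq(3) le_less_trans)
    ultimately show ?thesis unfolding resource_value_set_def by blast
  qed
  ultimately obtain p where p: "\<forall>i. 0 \<le> p $ i" "\<And>u r. (u, r) \<in> ?S \<Longrightarrow> r \<le> \<beta> + inner p (u - b)"
    using separating_multiplier assms(3) by blast
  have "(\<Sum>t\<in>T. f t (x t)) \<le> ereal (\<beta> + inner p ((\<Sum>t\<in>T. A t *v x t) - b))" for x
  proof (cases "\<Sum>t\<in>T. f t (x t)")
    case (real v)
    have "v \<le> \<beta> + inner p ((\<Sum>t\<in>T. A t *v x t) - b)"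
    proof (rule dense_le)
      fix r assume "r < v"
      then show "r \<le> \<beta> + inner p ((\<Sum>t\<in>T. A t *v x t) - b)"
        using real by (intro p(2)) (auto simp: resource_value_set_def)
    qed
    then show ?thesis using real by simp
  next
    case PInf
    then show ?thesis using assms(2) by (simp add: sum_Pinfty)
  qed simp
  with p(1) show ?thesis by (rule that)
qed

lemma sum_le_of_SUP_le:
  fixes F :: "'i \<Rightarrow> 'a \<Rightarrow> ereal"
  assumes "finite T" "\<And>t. t \<in> T \<Longrightarrow> (SUP y. F t y) = ereal (c t)"
    and "\<And>Y. (\<Sum>t\<in>T. F t (Y t)) \<le> ereal K"
  shows "sum c T \<le> K"
proof (rule field_le_epsilon)
  fix e :: real
  assume "0 < e"
  define \<eta> where "\<eta> = e / (real (card T) + 1)"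
  have "0 < \<eta>" "real (card T) * \<eta> \<le> e"
    unfolding \<eta>_def using \<open>0 < e\<close> by (auto simp: field_simps)
  have "\<exists>y. ereal (c t - \<eta>) < F t y" if "t \<in> T" for t
  proof -
    have "ereal (c t - \<eta>) < (SUP y. F t y)"
      using assms(2)[OF that] \<open>0 < \<eta>\<close> by simp
    then show ?thesis by (simp add: less_SUP_iff)
  qed
  then obtain Y where Y: "\<And>t. t \<in> T \<Longrightarrow> ereal (c t - \<eta>) < F t (Y t)"
    by metis
  have "ereal (\<Sum>t\<in>T. c t - \<eta>) \<le> (\<Sum>t\<in>T. F t (Y t))"
    unfolding sum_ereal[symmetric] using Y by (intro sum_mono less_imp_le)
  also have "\<dots> \<le> ereal K" by (rule assms(3))
  finally have "sum c T - real (card T) * \<eta> \<le> K"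
    by (simp add: sum_subtractf)
  then show "sum c T \<le> K + e"
    using \<open>real (card T) * \<eta> \<le> e\<close> by simp
qed

text \<open>Splitting the Lagrangian bound over the time steps: \<open>c t\<close> is the value of the
  \<open>t\<close>-th subproblem priced at the multiplier \<open>p\<close>.\<close>

lemma dual_decomposition:
  fixes f :: "'i \<Rightarrow> real^'k \<Rightarrow> ereal" and A :: "'i \<Rightarrow> real^'k^'m"
  assumes "finite T"
    and f: "\<And>t. t \<in> T \<Longrightarrow> f t 0 = 0 \<and> edom (f t) \<subseteq> {x. \<forall>j. 0 \<le> x $ j}"
    and A: "\<And>t i j. t \<in> T \<Longrightarrow> 0 \<le> A t $ i $ j"
    and bound: "\<And>t x. t \<in> T \<Longrightarrow> x \<in> edom (f t) \<Longrightarrow> f t x \<le> ereal a"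
    and p: "\<forall>i. 0 \<le> p $ i"
    and dual: "\<And>x. (\<Sum>t\<in>T. f t (x t)) \<le> ereal (\<beta> + inner p ((\<Sum>t\<in>T. A t *v x t) - b))"
  obtains c where "\<And>t. t \<in> T \<Longrightarrow> 0 \<le> c t \<and> c t \<le> a"
    "\<And>t y. t \<in> T \<Longrightarrow> f t y \<le> ereal (c t + inner p (A t *v y))"
    "sum c T \<le> \<beta> - inner p b"
proof -
  define F where "F t y = f t y + ereal (- inner p (A t *v y))" for t y
  define c where "c t = real_of_ereal (SUP y. F t y)" for t
  have SUP_ge: "0 \<le> (SUP y. F t y)" if "t \<in> T" for t
    using f[OF that] by (intro SUP_upper2[of 0]) (auto simp: F_def)
  have SUP_le: "(SUP y. F t y) \<le> ereal a" if t: "t \<in> T" for t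
  proof (rule SUP_least)
    fix y
    show "F t y \<le> ereal a"
    proof (cases "y \<in> edom (f t)")
      case True
      then have "\<forall>j. 0 \<le> y $ j" using f[OF t] by auto
      then have "0 \<le> inner p (A t *v y)"
        using A[OF t] p unfolding inner_vec_def matrix_vector_mult_def
        by (auto intro!: sum_nonneg mult_nonneg_nonneg)
      then show ?thesis
        using bound[OF t True] unfolding F_def by (cases "f t y") auto
    qed (simp add: F_def edom_def)
  qed
  have SUP_eq: "(SUP y. F t y) = ereal (c t)" if "t \<in> T" for t
    using SUP_ge[OF that] SUP_le[OF that] unfolding c_def by (cases "SUP y. F t y") auto
  show ?thesis
  proof
    show "0 \<le> c t \<and> c t \<le> a" if "t \<in> T" for t
      using SUP_ge[OF that] SUP_le[OF that] SUP_eq[OF that] by auto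
    show "f t y \<le> ereal (c t + inner p (A t *v y))" if "t \<in> T" for t y
      using SUP_upper[of y UNIV "F t"] SUP_eq[OF that] unfolding F_def
      by (cases "f t y") auto
    show "sum c T \<le> \<beta> - inner p b"
    proof (rule sum_le_of_SUP_le[OF assms(1) SUP_eq])
      fix Y
      have "(\<Sum>t\<in>T. F t (Y t)) = (\<Sum>t\<in>T. f t (Y t)) + ereal (- inner p (\<Sum>t\<in>T. A t *v Y t))"
        unfolding F_def by (simp add: sum.distrib inner_sum_right sum_negf)
      also have "\<dots> \<le> ereal (\<beta> + inner p ((\<Sum>t\<in>T. A t *v Y t) - b))
          + ereal (- inner p (\<Sum>t\<in>T. A t *v Y t))"
        using dual by (rule add_right_mono)
      also have "\<dots> = ereal (\<beta> - inner p b)"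
        by (simp add: inner_diff_right)
      finally show "(\<Sum>t\<in>T. F t (Y t)) \<le> ereal (\<beta> - inner p b)" .
    qed
  qed
qed

section \<open>The sampled problem\<close>

lemma theta_pos: "0 < \<epsilon> \<Longrightarrow> 0 < theta \<epsilon> h"
  unfolding theta_def by (intro mult_pos_pos) auto

lemma theta_squared:
  assumes "0 \<le> \<epsilon>"
  shows "2 ^ Suc h * (theta \<epsilon> h)\<^sup>2 = \<epsilon>"
proof -
  have "(theta \<epsilon> h)\<^sup>2 = (2 powr (- (real h + 1) / 2))\<^sup>2 * (sqrt \<epsilon>)\<^sup>2"
    unfolding theta_def by (simp add: power_mult_distrib)
  also have "(2 powr (- (real h + 1) / 2))\<^sup>2 = 2 powr (- (real h + 1))"
    by (simp add: power2_eq_square powr_add[symmetric])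
  also have "\<dots> = inverse (2 powr (real h + 1))"
    by (rule powr_minus)
  also have "(2::real) powr (real h + 1) = 2 ^ Suc h"
    by (simp add: powr_add powr_realpow)
  finally show ?thesis using assms by (simp add: inverse_eq_divide)
qed

lemma theta_less_one:
  assumes "0 \<le> \<epsilon>" "\<epsilon> < 1"
  shows "theta \<epsilon> h < 1"
proof (rule power2_less_imp_less)
  have "(1::real) \<le> 2 ^ Suc h"
    by (rule one_le_power) simp
  then have "1 * (theta \<epsilon> h)\<^sup>2 \<le> 2 ^ Suc h * (theta \<epsilon> h)\<^sup>2"
    by (rule mult_right_mono) simp
  then show "(theta \<epsilon> h)\<^sup>2 < 1\<^sup>2"
    using theta_squared[OF assms(1)] assms(2) by simp
qed simp

lemma sample_size_eq:
  assumes "real n * \<epsilon> \<in> \<int>" "0 \<le> \<epsilon>"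
  shows "real (nat \<lfloor>2 ^ h * real n * \<epsilon>\<rfloor>) = 2 ^ h * \<epsilon> * real n"
proof -
  obtain m where m: "real n * \<epsilon> = of_int m" using assms(1) by (auto elim: Ints_cases)
  have "0 \<le> m" using m assms(2) by (metis mult_nonneg_nonneg of_int_0_le_iff of_nat_0_le_iff)
  have "2 ^ h * real n * \<epsilon> = of_int (2 ^ h * m)" using m by (simp add: mult.assoc)
  then have "\<lfloor>2 ^ h * real n * \<epsilon>\<rfloor> = 2 ^ h * m" by (simp only: floor_of_int)
  then show ?thesis using \<open>0 \<le> m\<close> m by (simp add: algebra_simps)
qed

lemma sample_size_le:
  assumes "real n * \<epsilon> \<in> \<int>" "0 < \<epsilon>" "real L = log 2 (1 / \<epsilon>)" "h < L"
  shows "nat \<lfloor>2 ^ h * real n * \<epsilon>\<rfloor> \<le> n"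
proof -
  have "(2::real) ^ h \<le> 2 ^ L" using assms(4) by (simp add: power_increasing)
  also have "\<dots> = 2 powr real L" by (simp add: powr_realpow)
  also have "\<dots> = 1 / \<epsilon>" using assms(2,3) by simp
  finally have "2 ^ h * \<epsilon> * real n \<le> 1 * real n"
    using assms(2) by (intro mult_right_mono) (simp_all add: field_simps)
  moreover have "real (nat \<lfloor>2 ^ h * real n * \<epsilon>\<rfloor>) = 2 ^ h * \<epsilon> * real n"
    using assms(1,2) by (intro sample_size_eq) auto
  ultimately have "real (nat \<lfloor>2 ^ h * real n * \<epsilon>\<rfloor>) \<le> real n" by simp
  then show ?thesis by (simp only: of_nat_le_iff)
qed

lemma Pstar_dual_certificate:
  fixes f :: "nat \<Rightarrow> real^'k \<Rightarrow> ereal" and A :: "nat \<Rightarrow> real^'k^'m"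
  assumes fG: "\<forall>t\<in>{1..n}. classG (f t)" and A: "\<forall>t\<in>{1..n}. \<forall>i j. 0 \<le> A t $ i $ j"
    and b: "\<forall>i. 0 < b $ i" and Ps: "Pstar n f A b = ereal Ps"
    and bound: "\<forall>t\<in>{1..n}. \<forall>x\<in>edom (f t). f t x \<le> ereal a"
  obtains p c where "\<forall>i. 0 \<le> p $ i" "\<And>t. t \<in> {1..n} \<Longrightarrow> 0 \<le> c t \<and> c t \<le> a"
    "\<And>t y. t \<in> {1..n} \<Longrightarrow> f t y \<le> ereal (c t + inner p (A t *v y))"
    "sum c {1..n} \<le> Ps - inner p b"
proof -
  have f: "concave_efun (f t) \<and> (\<forall>y. f t y \<noteq> \<infinity>) \<and> f t 0 = 0
      \<and> edom (f t) \<subseteq> {x. \<forall>j. 0 \<le> x $ j}" if "t \<in> {1..n}" for t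
    using fG that unfolding classG_def proper_concave_fun_def by blast
  have opt: "(\<Sum>t\<in>{1..n}. f t (x t)) \<le> ereal Ps"
    if "\<forall>i. (\<Sum>t\<in>{1..n}. A t *v x t) $ i \<le> b $ i" for x
    unfolding Ps[symmetric] Pstar_def using that by (intro Sup_upper) blast
  obtain p where p: "\<forall>i. 0 \<le> p $ i"
    "\<And>x. (\<Sum>t\<in>{1..n}. f t (x t)) \<le> ereal (Ps + inner p ((\<Sum>t\<in>{1..n}. A t *v x t) - b))"
    using lagrange_multiplier_exists[of "{1..n}" f b A Ps] f b opt by auto
  obtain c where "\<And>t. t \<in> {1..n} \<Longrightarrow> 0 \<le> c t \<and> c t \<le> a"
    "\<And>t y. t \<in> {1..n} \<Longrightarrow> f t y \<le> ereal (c t + inner p (A t *v y))"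
    "sum c {1..n} \<le> Ps - inner p b"
    using dual_decomposition[of "{1..n}" f A a p Ps b] f A bound p by auto
  with p(1) show ?thesis by (rule that)
qed

lemma Ph_le_sample_value:
  fixes \<epsilon> :: real and h n :: nat and f :: "nat \<Rightarrow> real^'k \<Rightarrow> ereal" and A :: "nat \<Rightarrow> real^'k^'m"
    and c :: "nat \<Rightarrow> real"
  defines "s \<equiv> 2 ^ h * \<epsilon>" and "\<theta> \<equiv> theta \<epsilon> h" and "N \<equiv> nat \<lfloor>2 ^ h * real n * \<epsilon>\<rfloor>"
  assumes "0 < \<epsilon>" "\<epsilon> < 1" "N \<le> n" "\<sigma> permutes {1..n}" "\<forall>i. 0 \<le> p $ i"
    and price: "\<And>t y. t \<in> {1..n} \<Longrightarrow> f t y \<le> ereal (c t + inner p (A t *v y))"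
  shows "Ph \<epsilon> h n f A b \<sigma>
    \<le> ereal (((\<Sum>t\<in>{1..N}. c (\<sigma> t)) + s * (1 + \<theta>) * inner p b) / (s * (1 - \<theta>)))"
  unfolding Ph_def Let_def N_def[symmetric] \<theta>_def[symmetric] s_def[symmetric]
proof (rule Sup_least, clarify)
  fix x :: "nat \<Rightarrow> real^'k"
  assume feasible: "\<forall>i. 1 / (s * (1 + \<theta>)) * (\<Sum>t\<in>{1..N}. A (\<sigma> t) *v x t) $ i \<le> b $ i"
  have s: "0 < s" and \<theta>: "0 < \<theta>" "\<theta> < 1"
    using assms(4,5) theta_pos theta_less_one by (auto simp: s_def \<theta>_def)
  have used: "(\<Sum>t\<in>{1..N}. A (\<sigma> t) *v x t) $ i \<le> ((s * (1 + \<theta>)) *\<^sub>R b) $ i" for i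
  proof -
    have "0 < s * (1 + \<theta>)" using s \<theta> by simp
    then show ?thesis using feasible[rule_format, of i] by (simp add: field_simps)
  qed
  have "(\<Sum>t\<in>{1..N}. f (\<sigma> t) (x t)) \<le> (\<Sum>t\<in>{1..N}. ereal (c (\<sigma> t) + inner p (A (\<sigma> t) *v x t)))"
    using assms(6,7) permutes_in_image[OF assms(7)] by (intro sum_mono price) auto
  also have "\<dots> = ereal ((\<Sum>t\<in>{1..N}. c (\<sigma> t)) + inner p (\<Sum>t\<in>{1..N}. A (\<sigma> t) *v x t))"
    by (simp add: sum.distrib inner_sum_right)
  also have "\<dots> \<le> ereal ((\<Sum>t\<in>{1..N}. c (\<sigma> t)) + inner p ((s * (1 + \<theta>)) *\<^sub>R b))"
    using used assms(8) unfolding inner_vec_def by (auto intro!: sum_mono mult_left_mono)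
  finally have "ereal (1 / (s * (1 - \<theta>))) * (\<Sum>t\<in>{1..N}. f (\<sigma> t) (x t))
      \<le> ereal (1 / (s * (1 - \<theta>))) * ereal ((\<Sum>t\<in>{1..N}. c (\<sigma> t)) + s * (1 + \<theta>) * inner p b)"
    using s \<theta> by (intro ereal_mult_left_mono) auto
  then show "ereal (1 / (s * (1 - \<theta>))) * (\<Sum>t\<in>{1..N}. f (\<sigma> t) (x t))
      \<le> ereal (((\<Sum>t\<in>{1..N}. c (\<sigma> t)) + s * (1 + \<theta>) * inner p b) / (s * (1 - \<theta>)))"
    by simp
qed

lemma Ph_exceeds_imp_sample_exceeds:
  fixes \<epsilon> :: real and h n :: nat and f :: "nat \<Rightarrow> real^'k \<Rightarrow> ereal" and A :: "nat \<Rightarrow> real^'k^'m"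
  defines "s \<equiv> 2 ^ h * \<epsilon>" and "\<theta> \<equiv> theta \<epsilon> h" and "N \<equiv> nat \<lfloor>2 ^ h * real n * \<epsilon>\<rfloor>"
  assumes "0 < \<epsilon>" "\<epsilon> < 1" "N \<le> n" "\<sigma> permutes {1..n}" "\<forall>i. 0 \<le> p $ i"
    and "\<And>t y. t \<in> {1..n} \<Longrightarrow> f t y \<le> ereal (c t + inner p (A t *v y))"
    and C: "0 \<le> sum c {1..n}" "sum c {1..n} \<le> Ps - inner p b"
    and exceeds: "ereal ((1 + 2 * \<theta>) / (1 - \<theta>)) * ereal Ps < Ph \<epsilon> h n f A b \<sigma>"
  shows "s * (sum c {1..n} + \<theta> * Ps) < (\<Sum>t\<in>{1..N}. c (\<sigma> t))"
proof -
  define X where "X = (\<Sum>t\<in>{1..N}. c (\<sigma> t))"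
  have s: "0 < s" and \<theta>: "0 < \<theta>" "\<theta> < 1"
    using assms(4,5) theta_pos theta_less_one by (auto simp: s_def \<theta>_def)
  have "ereal ((1 + 2 * \<theta>) / (1 - \<theta>) * Ps) < Ph \<epsilon> h n f A b \<sigma>"
    using exceeds by simp
  also have "\<dots> \<le> ereal ((X + s * (1 + \<theta>) * inner p b) / (s * (1 - \<theta>)))"
    unfolding X_def s_def \<theta>_def N_def
    by (rule Ph_le_sample_value) (use assms(4-9) in \<open>simp_all add: N_def\<close>)
  finally have "ereal ((1 + 2 * \<theta>) / (1 - \<theta>) * Ps)
      < ereal ((X + s * (1 + \<theta>) * inner p b) / (s * (1 - \<theta>)))" .
  then have "(1 + 2 * \<theta>) / (1 - \<theta>) * Ps * (s * (1 - \<theta>)) < X + s * (1 + \<theta>) * inner p b"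
    using s \<theta> by (simp add: pos_less_divide_eq)
  moreover have "(1 + 2 * \<theta>) / (1 - \<theta>) * Ps * (s * (1 - \<theta>)) = s * (1 + 2 * \<theta>) * Ps"
    using \<theta> by (simp add: field_simps)
  ultimately have exceeds': "s * (1 + 2 * \<theta>) * Ps < X + s * (1 + \<theta>) * inner p b"
    by simp
  have "(1 + \<theta>) * inner p b \<le> (1 + \<theta>) * (Ps - sum c {1..n})"
    using C \<theta> by (intro mult_left_mono) auto
  moreover have "0 \<le> \<theta> * sum c {1..n}"
    using C \<theta> by simp
  ultimately have "sum c {1..n} + \<theta> * Ps \<le> (1 + 2 * \<theta>) * Ps - (1 + \<theta>) * inner p b"
    by (simp add: algebra_simps)
  then have "s * (sum c {1..n} + \<theta> * Ps) \<le> s * ((1 + 2 * \<theta>) * Ps - (1 + \<theta>) * inner p b)"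
    using s by (intro mult_left_mono) auto
  then show ?thesis
    using exceeds' unfolding X_def by (simp add: algebra_simps)
qed

lemma prob_uniform_permutation_le:
  assumes "finite S" "\<And>\<sigma>. \<sigma> permutes S \<Longrightarrow> \<sigma> \<in> E \<Longrightarrow> Q \<sigma>"
    and "real (card {\<sigma>. \<sigma> permutes S \<and> Q \<sigma>}) \<le> real (card {\<sigma>. \<sigma> permutes S}) * r"
  shows "measure_pmf.prob (pmf_of_set {\<sigma>. \<sigma> permutes S}) E \<le> r"
proof -
  let ?P = "{\<sigma>. \<sigma> permutes S}"
  have fin: "finite ?P" "?P \<noteq> {}"
    using finite_permutations[OF assms(1)] permutes_id[of S] by blast+
  have "card (?P \<inter> E) \<le> card {\<sigma>. \<sigma> permutes S \<and> Q \<sigma>}"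
    using assms(2) fin(1) by (intro card_mono) auto
  then have "real (card (?P \<inter> E)) \<le> real (card ?P) * r"
    using assms(3) by linarith
  then show ?thesis
    using fin by (simp add: measure_pmf_of_set divide_le_eq card_gt_0_iff mult.commute)
qed

lemma prob_Ph_exceeds_le:
  fixes \<epsilon> :: real and h n :: nat and f :: "nat \<Rightarrow> real^'k \<Rightarrow> ereal" and A :: "nat \<Rightarrow> real^'k^'m"
  defines "s \<equiv> 2 ^ h * \<epsilon>" and "\<theta> \<equiv> theta \<epsilon> h" and "N \<equiv> nat \<lfloor>2 ^ h * real n * \<epsilon>\<rfloor>"
  assumes "1 \<le> n" "0 < \<epsilon>" "\<epsilon> < 1" "N \<le> n" "real N = s * real n" "0 < \<gamma>" "0 < Ps"
    and b_pos: "\<forall>i. 0 < b $ i" and p: "\<forall>i. 0 \<le> p $ i"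
    and c: "\<And>t. t \<in> {1..n} \<Longrightarrow> 0 \<le> c t \<and> c t \<le> \<gamma> * Ps"
    and price: "\<And>t y. t \<in> {1..n} \<Longrightarrow> f t y \<le> ereal (c t + inner p (A t *v y))"
    and C: "sum c {1..n} \<le> Ps - inner p b"
  shows "measure_pmf.prob (pmf_of_set {\<sigma>. \<sigma> permutes {1..n}})
      {\<sigma>. ereal ((1 + 2 * \<theta>) / (1 - \<theta>)) * ereal Ps < Ph \<epsilon> h n f A b \<sigma>}
    \<le> exp (- (\<epsilon>\<^sup>2 / (6 * \<gamma>)))"
proof -
  define \<mu> where "\<mu> = s * sum c {1..n}"
  define \<delta> where "\<delta> = s * \<theta> * Ps"
  have s: "0 < s" and \<theta>: "0 < \<theta>" "\<theta> < 1"
    using assms(5,6) theta_pos theta_less_one by (auto simp: s_def \<theta>_def)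
  have "0 \<le> inner p b"
    using p b_pos unfolding inner_vec_def by (intro sum_nonneg) (simp add: less_imp_le)
  have C0: "0 \<le> sum c {1..n}"
    using c by (intro sum_nonneg) blast
  have "real (card {\<sigma>. \<sigma> permutes {1..n} \<and> \<mu> + \<delta> < (\<Sum>t\<in>{1..N}. c (\<sigma> t))})
      \<le> real (card {\<sigma>. \<sigma> permutes {1..n}}) * exp (- (\<delta>\<^sup>2 / (3 * (\<gamma> * Ps) * (s * Ps))))"
  proof (rule card_permutes_sample_gt_le)
    show "\<mu> = real (card {1..N}) / real (card {1..n}) * sum c {1..n}"
      using assms(4,8) by (simp add: \<mu>_def)
    show "\<mu> \<le> s * Ps" "0 < \<delta>" "\<delta> \<le> s * Ps"
      using s \<theta> assms(10) C \<open>0 \<le> inner p b\<close> by (auto simp: \<mu>_def \<delta>_def mult_le_cancel_left1)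
  qed (use c assms(4,7,9,10) in auto)
  also have "\<delta>\<^sup>2 / (3 * (\<gamma> * Ps) * (s * Ps)) = \<epsilon> * (2 ^ Suc h * \<theta>\<^sup>2) / (6 * \<gamma>)"
    using s assms(9,10) by (simp add: \<delta>_def s_def field_simps power2_eq_square)
  also have "\<dots> = \<epsilon>\<^sup>2 / (6 * \<gamma>)"
    using theta_squared[of \<epsilon> h] assms(5) by (simp add: \<theta>_def power2_eq_square)
  finally have card: "real (card {\<sigma>. \<sigma> permutes {1..n} \<and> \<mu> + \<delta> < (\<Sum>t\<in>{1..N}. c (\<sigma> t))})
      \<le> real (card {\<sigma>. \<sigma> permutes {1..n}}) * exp (- (\<epsilon>\<^sup>2 / (6 * \<gamma>)))" .
  have event: "\<mu> + \<delta> < (\<Sum>t\<in>{1..N}. c (\<sigma> t))"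
    if "\<sigma> permutes {1..n}"
      "\<sigma> \<in> {\<sigma>. ereal ((1 + 2 * \<theta>) / (1 - \<theta>)) * ereal Ps < Ph \<epsilon> h n f A b \<sigma>}" for \<sigma>
  proof -
    have "s * (sum c {1..n} + \<theta> * Ps) < (\<Sum>t\<in>{1..N}. c (\<sigma> t))"
      unfolding s_def \<theta>_def N_def
      by (rule Ph_exceeds_imp_sample_exceeds[where p = p])
        (use assms(5-7) that p price C0 C in \<open>simp_all add: \<theta>_def N_def\<close>)
    then show ?thesis by (simp add: \<mu>_def \<delta>_def algebra_simps)
  qed
  show ?thesis
    by (rule prob_uniform_permutation_le[OF _ event card]) simp
qed

theorem mainTheorem5:
  fixes n L h :: nat and \<epsilon> \<gamma> :: real
    and f :: "nat \<Rightarrow> real^'k \<Rightarrow> ereal" and A :: "nat \<Rightarrow> real^'k^'m" and b :: "real^'m"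
  assumes n_pos: "n \<ge> 1"
    and b_pos: "\<forall>i. b $ i > 0"
    and fG: "\<forall>t\<in>{1..n}. classG (f t)"
    and A_nonneg: "\<forall>t\<in>{1..n}. \<forall>i j. A t $ i $ j \<ge> 0"
    and Pstar_pos: "Pstar n f A b > 0"
    and gamma_pos: "\<gamma> > 0"
    and gamma_A: "\<forall>t\<in>{1..n}. \<forall>x. f t x \<ge> 0 \<longrightarrow> (\<forall>i. (A t *v x) $ i / b $ i \<le> \<gamma>)"
    and gamma_f: "\<forall>t\<in>{1..n}. \<forall>x\<in>edom (f t). f t x \<le> ereal \<gamma> * Pstar n f A b"
    and eps: "0 < \<epsilon>" "\<epsilon> < 1"
    and L_def: "real L = log 2 (1 / \<epsilon>)"
    and n_eps: "real n * \<epsilon> \<in> \<int>"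
    and h: "h < L"
  shows "measure_pmf.prob (pmf_of_set {\<sigma>. \<sigma> permutes {1..n}})
           {\<sigma>. Ph \<epsilon> h n f A b \<sigma> >
                ereal ((1 + 2 * theta \<epsilon> h) / (1 - theta \<epsilon> h)) * Pstar n f A b}
         \<le> exp (- (\<epsilon>^2 / (6 * \<gamma>)))"
proof (cases "Pstar n f A b")
  case PInf
  define K where "K = (1 + 2 * theta \<epsilon> h) / (1 - theta \<epsilon> h)"
  have "0 < K"
    using theta_pos[OF eps(1), of h] theta_less_one[of \<epsilon> h] eps unfolding K_def
    by (intro divide_pos_pos) auto
  then have "{\<sigma>. Ph \<epsilon> h n f A b \<sigma> > ereal K * Pstar n f A b} = {}"
    using PInf by simp
  then show ?thesis by (simp add: K_def)
next
  case MInf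
  then show ?thesis using Pstar_pos by simp
next
  case (real Ps)
  obtain p c where "\<forall>i. 0 \<le> p $ i" "\<And>t. t \<in> {1..n} \<Longrightarrow> 0 \<le> c t \<and> c t \<le> \<gamma> * Ps"
    "\<And>t y. t \<in> {1..n} \<Longrightarrow> f t y \<le> ereal (c t + inner p (A t *v y))"
    "sum c {1..n} \<le> Ps - inner p b"
    using Pstar_dual_certificate[OF fG A_nonneg b_pos real] gamma_f real by auto
  then have "measure_pmf.prob (pmf_of_set {\<sigma>. \<sigma> permutes {1..n}})
      {\<sigma>. ereal ((1 + 2 * theta \<epsilon> h) / (1 - theta \<epsilon> h)) * ereal Ps < Ph \<epsilon> h n f A b \<sigma>}
    \<le> exp (- (\<epsilon>\<^sup>2 / (6 * \<gamma>)))"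
    using n_pos eps gamma_pos Pstar_pos real b_pos sample_size_le[OF n_eps eps(1) L_def h]
      sample_size_eq[OF n_eps, of h]
    by (intro prob_Ph_exceeds_le) auto
  then show ?thesis using real by simp
qed

end
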